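(* Let $r\in(0,1)$ and $v\in W^{1,2}_{[0]}(0,1)$. Then for every $\epsilon>0$, $$\|v\|_{L^2(0,1)}^{\frac{3+r}{2}}\le\frac{(3+r)\epsilon}{2}\|v_y\|_{L^2(0,1)}^2+\frac{3+r}{8\epsilon}\|v\|_{L^{1+r}(0,1)}^{1+r}.$$
   Context: $W^{1,2}_{[0]}(0,1):=\{g\in W^{1,2}(0,1): g(0)=0\}$; $v_y$ denotes the weak derivative of $v$; $\|v\|_{L^{1+r}(0,1)}=\left(\int_0^1|v|^{1+r}\mathrm{d}x\right)^{1/(1+r)}$. *)

theory Defs
  imports "HOL-Analysis.Analysis"
begin

definition test_fun01 :: "(real \<Rightarrow> real) \<Rightarrow> bool" where
  "test_fun01 \<phi> \<longleftrightarrow>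
     (\<forall>k. (deriv ^^ k) \<phi> differentiable_on UNIV) \<and>
     (\<exists>a b. 0 < a \<and> a \<le> b \<and> b < 1 \<and> (\<forall>x. x \<notin> {a..b} \<longrightarrow> \<phi> x = 0))"

definition L2_01 :: "(real \<Rightarrow> real) \<Rightarrow> bool" where
  "L2_01 f \<longleftrightarrow> set_integrable lborel {0<..<1} f
                 \<and> set_integrable lborel {0<..<1} (\<lambda>x. (f x)\<^sup>2)"

definition weak_deriv01 :: "(real \<Rightarrow> real) \<Rightarrow> (real \<Rightarrow> real) \<Rightarrow> bool" where
  "weak_deriv01 v w \<longleftrightarrow>
     set_integrable lborel {0<..<1} v \<and> set_integrable lborel {0<..<1} w \<and>
     (\<forall>\<phi>. test_fun01 \<phi> \<longrightarrow>
        (LINT x:{0<..<1}|lborel. v x * deriv \<phi> x) = - (LINT x:{0<..<1}|lborel. w x * \<phi> x))"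

text \<open>W^{1,2}_{[0]}(0,1): v is (the continuous representative on [0,1] of) a W^{1,2}(0,1)
  function with weak derivative w, and v(0) = 0.\<close>
definition W12_0 :: "(real \<Rightarrow> real) \<Rightarrow> (real \<Rightarrow> real) \<Rightarrow> bool" where
  "W12_0 v w \<longleftrightarrow> continuous_on {0..1} v \<and> L2_01 v \<and> L2_01 w \<and> weak_deriv01 v w \<and> v 0 = 0"

definition L2norm01 :: "(real \<Rightarrow> real) \<Rightarrow> real" where
  "L2norm01 f = sqrt (LINT x:{0<..<1}|lborel. (f x)\<^sup>2)"

definition Lpnorm01 :: "real \<Rightarrow> (real \<Rightarrow> real) \<Rightarrow> real" where
  "Lpnorm01 p f = (LINT x:{0<..<1}|lborel. \<bar>f x\<bar> powr p) powr (1 / p)"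

end

theory Submission
  imports Defs "HOL-Computational_Algebra.Polynomial"
begin

text \<open>Put \<open>q = (3 + r) / 2\<close> and \<open>p = q - 1 = (1 + r) / 2\<close>. Since \<open>v(0) = 0\<close>, the chain rule
  for \<open>|v|\<^sup>q\<close> gives \<open>|v(x)|\<^sup>q \<le> q \<integral>\<^sub>0\<^sup>1 |v|\<^sup>p |v\<^sub>y|\<close> for every \<open>x\<close>, and Young's
  inequality \<open>ab \<le> \<epsilon>b\<^sup>2 + a\<^sup>2/(4\<epsilon>)\<close> bounds the right-hand side by the right-hand side of the claim,
  because \<open>|v|\<^sup>2\<^sup>p = |v|\<^sup>1\<^sup>+\<^sup>r\<close>. As \<open>\<parallel>v\<parallel>\<^sub>2 \<le> sup |v|\<close> on \<open>(0,1)\<close>, the claim follows.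

  The weak derivative enters only through \<open>v(t) - v(s) = \<integral>\<^sub>s\<^sup>t v\<^sub>y\<close>, obtained by testing
  against a smooth approximation of the indicator of \<open>(s, t]\<close> (built from the flat function
  \<open>e\<^sup>-\<^sup>1\<^sup>/\<^sup>x\<close>) and letting the width of its transition layers tend to \<open>0\<close>. The chain rule is
  then obtained by summing the mean value estimate for \<open>|v|\<^sup>q\<close> over a fine partition, using
  uniform continuity of \<open>|v|\<^sup>p\<close>.\<close>

section \<open>Smooth functions\<close>

definition smooth :: "(real \<Rightarrow> real) \<Rightarrow> bool" where
  "smooth f \<longleftrightarrow> (\<forall>k. (deriv ^^ k) f differentiable_on UNIV)"

lemma smooth_coinduct:
  assumes "P f"
    and step: "\<And>g. P g \<Longrightarrow> \<exists>g'. (\<forall>x. (g has_real_derivative g' x) (at x)) \<and> P g'"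
  shows "smooth f"
proof -
  have "\<forall>g. P g \<longrightarrow> (deriv ^^ k) g differentiable_on UNIV" for k
  proof (induction k)
    case 0
    show ?case
      using step by (auto simp: differentiable_on_def real_differentiable_def)
  next
    case (Suc k)
    show ?case
    proof (intro allI impI)
      fix g assume "P g"
      then obtain g' where g': "\<And>x. (g has_real_derivative g' x) (at x)" and "P g'"
        using step by blast
      have "deriv g = g'"
        using g' DERIV_imp_deriv by blast
      with \<open>P g'\<close> Suc show "(deriv ^^ Suc k) g differentiable_on UNIV"
        by (simp add: funpow_Suc_right del: funpow.simps)
    qed
  qed
  with \<open>P f\<close> show ?thesis
    by (auto simp: smooth_def)
qed

lemma smooth_has_real_derivative: "smooth f \<Longrightarrow> (f has_real_derivative deriv f x) (at x)"
  unfolding smooth_def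
  by (metis DERIV_deriv_iff_real_differentiable UNIV_I at_within_open differentiable_on_def
      funpow_0 open_UNIV)

lemma smooth_deriv: "smooth f \<Longrightarrow> smooth (deriv f)"
  unfolding smooth_def by (metis funpow_Suc_right o_apply)

lemma smooth_add: "smooth a \<Longrightarrow> smooth b \<Longrightarrow> smooth (\<lambda>x. a x + b x)"
proof (rule smooth_coinduct[where P = "\<lambda>g. \<exists>a b. smooth a \<and> smooth b \<and> g = (\<lambda>x. a x + b x)"])
  fix g assume "\<exists>a b. smooth a \<and> smooth b \<and> g = (\<lambda>x. a x + b x)"
  then obtain a b where "smooth a" "smooth b" and g: "g = (\<lambda>x. a x + b x)"
    by blast
  then have "(g has_real_derivative deriv a x + deriv b x) (at x)" for x
    unfolding g by (intro derivative_intros smooth_has_real_derivative)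
  with \<open>smooth a\<close> \<open>smooth b\<close> show "\<exists>g'. (\<forall>x. (g has_real_derivative g' x) (at x))
      \<and> (\<exists>a b. smooth a \<and> smooth b \<and> g' = (\<lambda>x. a x + b x))"
    by (intro exI[of _ "\<lambda>x. deriv a x + deriv b x"] conjI exI[of _ "deriv a"] exI[of _ "deriv b"])
      (auto intro: smooth_deriv)
qed blast

lemma smooth_affine: "smooth a \<Longrightarrow> smooth (\<lambda>x. k * a (c * x + d))"
proof (rule smooth_coinduct[where P = "\<lambda>g. \<exists>k a. smooth a \<and> g = (\<lambda>x. k * a (c * x + d))"])
  fix g assume "\<exists>k a. smooth a \<and> g = (\<lambda>x. k * a (c * x + d))"
  then obtain k a where "smooth a" and g: "g = (\<lambda>x. k * a (c * x + d))"
    by blast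
  have "(g has_real_derivative (k * c) * deriv a (c * x + d)) (at x)" for x
  proof -
    have "((\<lambda>x. a (c * x + d)) has_real_derivative deriv a (c * x + d) * c) (at x)"
      by (rule DERIV_chain2[OF smooth_has_real_derivative[OF \<open>smooth a\<close>]])
        (auto intro!: derivative_eq_intros)
    from DERIV_cmult[OF this, of k] show ?thesis
      unfolding g by (simp add: ac_simps)
  qed
  with \<open>smooth a\<close> show "\<exists>g'. (\<forall>x. (g has_real_derivative g' x) (at x))
      \<and> (\<exists>k a. smooth a \<and> g' = (\<lambda>x. k * a (c * x + d)))"
    by (intro exI[of _ "\<lambda>x. (k * c) * deriv a (c * x + d)"] conjI exI[of _ "k * c"]
        exI[of _ "deriv a"]) (auto intro: smooth_deriv)
qed blast

text \<open>By the Leibniz rule, finite sums of products of smooth functions are closed under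
  differentiation; this is the invariant for the coinduction proving \<open>smooth_mult\<close>.\<close>

inductive sum_of_smooth_products :: "(real \<Rightarrow> real) \<Rightarrow> bool" where
  zero: "sum_of_smooth_products (\<lambda>x. 0)"
| mult_add: "smooth a \<Longrightarrow> smooth b \<Longrightarrow> sum_of_smooth_products g \<Longrightarrow>
    sum_of_smooth_products (\<lambda>x. a x * b x + g x)"

lemma sum_of_smooth_products_has_derivative:
  "sum_of_smooth_products g \<Longrightarrow>
    \<exists>g'. (\<forall>x. (g has_real_derivative g' x) (at x)) \<and> sum_of_smooth_products g'"
proof (induction rule: sum_of_smooth_products.induct)
  case zero
  show ?case
    by (intro exI[of _ "\<lambda>x. 0"]) (auto intro: sum_of_smooth_products.zero)
next
  case (mult_add a b g)
  then obtain g' where g': "\<And>x. (g has_real_derivative g' x) (at x)" "sum_of_smooth_products g'"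
    by blast
  have "((\<lambda>x. a x * b x + g x) has_real_derivative
      deriv a x * b x + (a x * deriv b x + g' x)) (at x)" for x
    using smooth_has_real_derivative[OF mult_add(1)] smooth_has_real_derivative[OF mult_add(2)] g'(1)
    by (auto intro!: derivative_eq_intros)
  moreover have "sum_of_smooth_products (\<lambda>x. deriv a x * b x + (a x * deriv b x + g' x))"
    using mult_add(1,2) g'(2)
    by (intro sum_of_smooth_products.mult_add smooth_deriv)
  ultimately show ?case
    by (intro exI[of _ "\<lambda>x. deriv a x * b x + (a x * deriv b x + g' x)"]) blast
qed

lemma smooth_mult: "smooth a \<Longrightarrow> smooth b \<Longrightarrow> smooth (\<lambda>x. a x * b x)"
  using smooth_coinduct[of sum_of_smooth_products, OF _ sum_of_smooth_products_has_derivative]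
    sum_of_smooth_products.mult_add[OF _ _ sum_of_smooth_products.zero, of a b]
  by simp

text \<open>The polynomial factor makes this family of flat functions closed under differentiation.\<close>

definition poly_exp_neg_recip :: "real poly \<Rightarrow> real \<Rightarrow> real" where
  "poly_exp_neg_recip p x = (if 0 < x then poly p (1 / x) * exp (- 1 / x) else 0)"

lemma tendsto_power_poly_exp_neg_at_top:
  "((\<lambda>t::real. t ^ k * poly p t * exp (- t)) \<longlongrightarrow> 0) at_top"
proof (induction p arbitrary: k rule: pCons_induct)
  case 0
  then show ?case by simp
next
  case (pCons a p)
  have "((\<lambda>t. a * (t ^ k / exp t) + t ^ Suc k * poly p t * exp (- t)) \<longlongrightarrow> a * 0 + 0) at_top"
    by (intro tendsto_intros tendsto_power_div_exp_0 pCons.IH)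
  moreover have "(\<lambda>t. a * (t ^ k / exp t) + t ^ Suc k * poly p t * exp (- t)) =
      (\<lambda>t. t ^ k * poly (pCons a p) t * exp (- t))"
    by (auto simp: exp_minus field_simps)
  ultimately show ?case
    by simp
qed

lemma poly_exp_neg_recip_has_derivative_0: "(poly_exp_neg_recip p has_real_derivative 0) (at 0)"
proof -
  \<comment> \<open>The right difference quotient is \<open>t P(t) e\<^sup>-\<^sup>t\<close> with \<open>t = 1/h \<rightarrow> \<infinity>\<close>.\<close>
  have "((\<lambda>h. poly_exp_neg_recip p h / h) \<longlongrightarrow> 0) (at_right 0)"
  proof (rule Lim_transform_eventually)
    show "((\<lambda>h. inverse h ^ 1 * poly p (inverse h) * exp (- inverse h)) \<longlongrightarrow> 0) (at_right 0)"
      by (rule filterlim_compose[OF tendsto_power_poly_exp_neg_at_top filterlim_inverse_at_top_right])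
    show "\<forall>\<^sub>F h in at_right 0. inverse h ^ 1 * poly p (inverse h) * exp (- inverse h)
        = poly_exp_neg_recip p h / h"
      by (rule eventually_mono[OF eventually_at_right_less])
        (auto simp: poly_exp_neg_recip_def field_simps)
  qed
  moreover have "\<forall>\<^sub>F h in at_left 0. poly_exp_neg_recip p h / h = 0"
    by (rule eventually_mono[OF eventually_at_left_real[of "-1"]])
      (auto simp: poly_exp_neg_recip_def)
  ultimately have "((\<lambda>h. poly_exp_neg_recip p h / h) \<longlongrightarrow> 0) (at 0)"
    by (auto simp: filterlim_at_split tendsto_eventually)
  then show ?thesis
    by (simp add: DERIV_def poly_exp_neg_recip_def)
qed

lemma poly_exp_neg_recip_has_derivative:
  "(poly_exp_neg_recip p has_real_derivative
      poly_exp_neg_recip ([:0, 0, 1:] * (p - pderiv p)) x) (at x)"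
proof (cases x "0 :: real" rule: linorder_cases)
  case greater
  have "((\<lambda>y. poly p (1 / y)) has_real_derivative poly (pderiv p) (1 / x) * (- 1 / x\<^sup>2)) (at x)"
    by (rule DERIV_chain2[of "poly p"])
      (use greater in \<open>auto intro!: derivative_eq_intros simp: power2_eq_square\<close>)
  moreover have "((\<lambda>y. exp (- 1 / y)) has_real_derivative exp (- 1 / x) * (1 / x\<^sup>2)) (at x)"
    using greater by (auto intro!: derivative_eq_intros simp: power2_eq_square field_simps)
  ultimately have "((\<lambda>y. poly p (1 / y) * exp (- 1 / y)) has_real_derivative
      poly (pderiv p) (1 / x) * (- 1 / x\<^sup>2) * exp (- 1 / x) + exp (- 1 / x) * (1 / x\<^sup>2) * poly p (1 / x))
      (at x)"
    by (rule DERIV_mult)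
  moreover have "poly (pderiv p) (1 / x) * (- 1 / x\<^sup>2) * exp (- 1 / x)
      + exp (- 1 / x) * (1 / x\<^sup>2) * poly p (1 / x)
      = poly_exp_neg_recip ([:0, 0, 1:] * (p - pderiv p)) x"
    using greater by (simp add: poly_exp_neg_recip_def algebra_simps power2_eq_square)
  ultimately have "((\<lambda>y. poly p (1 / y) * exp (- 1 / y)) has_real_derivative
      poly_exp_neg_recip ([:0, 0, 1:] * (p - pderiv p)) x) (at x)"
    by simp
  then show ?thesis
    by (rule has_field_derivative_transform_within_open[of _ _ _ "{0<..}"])
      (use greater in \<open>auto simp: poly_exp_neg_recip_def\<close>)
next
  case less
  have "((\<lambda>y. 0) has_real_derivative 0) (at x)"
    by simp
  then have "(poly_exp_neg_recip p has_real_derivative 0) (at x)"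
    by (rule has_field_derivative_transform_within_open[of _ _ _ "{..<0}"])
      (use less in \<open>auto simp: poly_exp_neg_recip_def\<close>)
  then show ?thesis
    using less by (simp add: poly_exp_neg_recip_def)
next
  case equal
  then show ?thesis
    using poly_exp_neg_recip_has_derivative_0 by (simp add: poly_exp_neg_recip_def)
qed

lemma smooth_poly_exp_neg_recip: "smooth (poly_exp_neg_recip p)"
proof (rule smooth_coinduct[where P = "\<lambda>g. \<exists>p. g = poly_exp_neg_recip p"])
  fix g assume "\<exists>p. g = poly_exp_neg_recip p"
  then obtain p where "g = poly_exp_neg_recip p"
    by blast
  then show "\<exists>g'. (\<forall>x. (g has_real_derivative g' x) (at x)) \<and> (\<exists>p. g' = poly_exp_neg_recip p)"
    using poly_exp_neg_recip_has_derivative by blast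
qed blast

definition bump :: "real \<Rightarrow> real" where
  "bump x = poly_exp_neg_recip 1 x * poly_exp_neg_recip 1 (1 - x)"

lemma bump_eq: "bump x = (if 0 < x \<and> x < 1 then exp (- 1 / x) * exp (- 1 / (1 - x)) else 0)"
  by (simp add: bump_def poly_exp_neg_recip_def)

lemma smooth_bump: "smooth bump"
proof -
  have "smooth (\<lambda>x. 1 * poly_exp_neg_recip 1 ((- 1) * x + 1))"
    by (rule smooth_affine[OF smooth_poly_exp_neg_recip])
  then show ?thesis
    unfolding bump_def[abs_def] by (intro smooth_mult smooth_poly_exp_neg_recip) simp
qed

lemma isCont_bump: "isCont bump x"
  using DERIV_isCont smooth_bump smooth_has_real_derivative by blast

definition bump_primitive :: "real \<Rightarrow> real" where
  "bump_primitive = (SOME F. \<forall>x. (F has_real_derivative bump x) (at x))"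

lemma bump_primitive_has_derivative: "(bump_primitive has_real_derivative bump x) (at x)"
proof -
  have "\<exists>F. \<forall>x::real. (- \<infinity> :: ereal) < x \<longrightarrow> x < \<infinity> \<longrightarrow> (F has_vector_derivative bump x) (at x)"
    by (rule einterval_antiderivative) (auto simp: isCont_bump)
  then have "\<exists>F. \<forall>x. (F has_real_derivative bump x) (at x)"
    by (auto simp: has_real_derivative_iff_has_vector_derivative)
  from someI_ex[OF this] show ?thesis
    unfolding bump_primitive_def by blast
qed

definition bump_mass :: real where
  "bump_mass = bump_primitive 1 - bump_primitive 0"

lemma bump_mass_pos: "0 < bump_mass"
proof -
  obtain z :: real where "0 < z" "z < 1" "bump_primitive 1 - bump_primitive 0 = (1 - 0) * bump z"
    using MVT2[of 0 1 bump_primitive bump] bump_primitive_has_derivative by auto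
  then show ?thesis
    by (simp add: bump_mass_def bump_eq)
qed

definition ramp :: "real \<Rightarrow> real" where
  "ramp x = (bump_primitive x - bump_primitive 0) / bump_mass"

lemma ramp_has_derivative: "(ramp has_real_derivative bump x / bump_mass) (at x)"
proof -
  have "((\<lambda>x. (bump_primitive x - bump_primitive 0) / bump_mass) has_real_derivative
      (bump x - 0) / bump_mass) (at x)"
    by (intro DERIV_cdivide DERIV_diff bump_primitive_has_derivative DERIV_const)
  then show ?thesis
    by (simp add: ramp_def[abs_def])
qed

lemma ramp_const_outside:
  assumes "a \<le> b" and "b \<le> 0 \<or> 1 \<le> a"
  shows "ramp a = ramp b"
proof (cases "a = b")
  case False
  with assms have "a < b"
    by simp
  then obtain z where "a < z" "z < b" "ramp b - ramp a = (b - a) * (bump z / bump_mass)"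
    using MVT2[of a b ramp "\<lambda>x. bump x / bump_mass"] ramp_has_derivative by blast
  moreover have "bump z = 0"
    using assms \<open>a < z\<close> \<open>z < b\<close> by (auto simp: bump_eq)
  ultimately show ?thesis
    by simp
qed simp

lemma ramp_eq_0: "x \<le> 0 \<Longrightarrow> ramp x = 0"
  using ramp_const_outside[of x 0] by (simp add: ramp_def)

lemma ramp_eq_1: "1 \<le> x \<Longrightarrow> ramp x = 1"
  using ramp_const_outside[of 1 x] bump_mass_pos by (simp add: ramp_def bump_mass_def)

lemma ramp_mono:
  assumes "a \<le> b"
  shows "ramp a \<le> ramp b"
proof (rule DERIV_nonneg_imp_nondecreasing[OF assms])
  fix x
  have "0 \<le> bump x / bump_mass"
    using bump_mass_pos by (simp add: bump_eq)
  then show "\<exists>y. (ramp has_real_derivative y) (at x) \<and> 0 \<le> y"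
    using ramp_has_derivative by blast
qed

lemma ramp_bounds: "0 \<le> ramp x" "ramp x \<le> 1"
proof -
  show "0 \<le> ramp x"
    using ramp_mono[of "min x 0" x] ramp_eq_0[of "min x 0"] by simp
  show "ramp x \<le> 1"
    using ramp_mono[of x "max x 1"] ramp_eq_1[of "max x 1"] by simp
qed

lemma smooth_ramp: "smooth ramp"
proof (rule smooth_coinduct[where P = "\<lambda>g. g = ramp \<or> smooth g"])
  fix g assume "g = ramp \<or> smooth g"
  then show "\<exists>g'. (\<forall>x. (g has_real_derivative g' x) (at x)) \<and> (g' = ramp \<or> smooth g')"
  proof
    assume "g = ramp"
    have "smooth (\<lambda>x. (1 / bump_mass) * bump (1 * x + 0))"
      by (rule smooth_affine[OF smooth_bump])
    then have "smooth (\<lambda>x. bump x / bump_mass)"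
      by simp
    with \<open>g = ramp\<close> show ?thesis
      by (intro exI[of _ "\<lambda>x. bump x / bump_mass"] conjI allI disjI2) (simp_all add: ramp_has_derivative)
  next
    assume "smooth g"
    then show ?thesis
      by (intro exI[of _ "deriv g"] conjI allI disjI2 smooth_has_real_derivative smooth_deriv)
  qed
qed simp

lemma set_integrable_Ioo_if_continuous_on_Icc:
  fixes f :: "real \<Rightarrow> real"
  shows "continuous_on {a..b} f \<Longrightarrow> set_integrable lborel {a<..<b} f"
  by (rule set_integrable_subset[OF borel_integrable_atLeastAtMost']) auto

lemma continuous_on_abs_powr:
  fixes v :: "real \<Rightarrow> real"
  shows "continuous_on S v \<Longrightarrow> 0 < p \<Longrightarrow> continuous_on S (\<lambda>x. \<bar>v x\<bar> powr p)"
  by (intro continuous_on_powr' continuous_on_rabs continuous_on_const) auto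

lemma set_integrable_continuous_on_Icc_mult:
  fixes g w :: "real \<Rightarrow> real"
  assumes g: "continuous_on {a..b} g" and w: "set_integrable lborel A w"
    and A: "A \<subseteq> {a..b}" "A \<in> sets borel"
  shows "set_integrable lborel A (\<lambda>x. g x * w x)"
proof -
  obtain B where B: "\<And>x. x \<in> {a..b} \<Longrightarrow> \<bar>g x\<bar> \<le> B"
    using compact_imp_bounded[OF compact_continuous_image[OF g compact_Icc]]
    unfolding bounded_iff by fastforce
  show ?thesis
  proof (rule set_integrable_bound[OF set_integrable_mult_right[OF w, of B]])
    have "(\<lambda>x. indicator A x * g x) \<in> borel_measurable lborel"
      using borel_measurable_continuous_on_indicator[OF A(2) continuous_on_subset[OF g A(1)]] by simp
    moreover have "(\<lambda>x. indicator A x * w x) \<in> borel_measurable lborel"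
      using w by (simp add: set_integrable_def)
    ultimately have "(\<lambda>x. (indicator A x * g x) * (indicator A x * w x)) \<in> borel_measurable lborel"
      by (rule borel_measurable_times)
    moreover have "(\<lambda>x. indicator A x *\<^sub>R (g x * w x)) = (\<lambda>x. (indicator A x * g x) * (indicator A x * w x))"
      by (auto simp: indicator_def fun_eq_iff)
    ultimately show "set_borel_measurable lborel A (\<lambda>x. g x * w x)"
      unfolding set_borel_measurable_def by simp
    show "AE x in lborel. x \<in> A \<longrightarrow> norm (g x * w x) \<le> norm (B * w x)"
    proof (intro AE_I2 impI)
      fix x assume "x \<in> A"
      then have "\<bar>g x\<bar> \<le> \<bar>B\<bar>"
        using A(1) B by fastforce
      then show "norm (g x * w x) \<le> norm (B * w x)"
        by (simp add: abs_mult mult_right_mono)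
    qed
  qed
qed

lemma set_integral_mono_set_nonneg:
  fixes f :: "real \<Rightarrow> real"
  assumes f: "set_integrable lborel B f" and "A \<subseteq> B" "A \<in> sets borel"
    and nonneg: "\<And>x. x \<in> B \<Longrightarrow> 0 \<le> f x"
  shows "(LINT x:A|lborel. f x) \<le> (LINT x:B|lborel. f x)"
  unfolding set_lebesgue_integral_def
proof (rule integral_mono)
  show "integrable lborel (\<lambda>x. indicator A x *\<^sub>R f x)"
    using set_integrable_subset[OF f] assms(2,3) by (simp add: set_integrable_def)
  show "integrable lborel (\<lambda>x. indicator B x *\<^sub>R f x)"
    using f by (simp add: set_integrable_def)
  show "indicator A x *\<^sub>R f x \<le> indicator B x *\<^sub>R f x" for x
    using assms(2) nonneg by (auto simp: indicator_def)
qed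

lemma mult_le_eps_square_add:
  fixes a b \<epsilon> :: real
  assumes "0 < \<epsilon>"
  shows "a * b \<le> \<epsilon> * b\<^sup>2 + a\<^sup>2 / (4 * \<epsilon>)"
proof -
  have "4 * \<epsilon> * (a * b) \<le> 4 * \<epsilon> * (\<epsilon> * b\<^sup>2) + a\<^sup>2"
    using zero_le_power2[of "2 * \<epsilon> * b - a"] by (simp add: power2_eq_square algebra_simps)
  then show ?thesis
    using assms by (simp add: field_simps)
qed

lemma set_integral_mult_le_eps_square_add:
  fixes f g :: "real \<Rightarrow> real"
  assumes "set_integrable lborel A (\<lambda>x. f x * g x)" "set_integrable lborel A (\<lambda>x. (f x)\<^sup>2)"
    "set_integrable lborel A (\<lambda>x. (g x)\<^sup>2)" and "0 < \<epsilon>"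
  shows "(LINT x:A|lborel. f x * g x)
    \<le> \<epsilon> * (LINT x:A|lborel. (g x)\<^sup>2) + (LINT x:A|lborel. (f x)\<^sup>2) / (4 * \<epsilon>)"
proof -
  have "(LINT x:A|lborel. f x * g x) \<le> (LINT x:A|lborel. \<epsilon> * (g x)\<^sup>2 + (f x)\<^sup>2 / (4 * \<epsilon>))"
    using assms by (intro set_integral_mono mult_le_eps_square_add) auto
  also have "\<dots> = \<epsilon> * (LINT x:A|lborel. (g x)\<^sup>2) + (LINT x:A|lborel. (f x)\<^sup>2) / (4 * \<epsilon>)"
    using assms by (simp add: set_integral_add)
  finally show ?thesis .
qed

section \<open>The fundamental theorem of calculus for weak derivatives\<close>

definition ramp_kernel :: "real \<Rightarrow> real \<Rightarrow> real \<Rightarrow> real" where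
  "ramp_kernel y h x = bump ((x - y) / h) / (bump_mass * h)"

lemma ramp_shift_has_derivative:
  assumes "0 < h"
  shows "((\<lambda>x. ramp ((x - y) / h)) has_real_derivative ramp_kernel y h x) (at x)"
proof -
  have "((\<lambda>x. (x - y) / h) has_real_derivative 1 / h) (at x)"
    using assms by (auto intro!: derivative_eq_intros)
  from DERIV_chain2[OF ramp_has_derivative this] show ?thesis
    using assms by (simp add: ramp_kernel_def field_simps)
qed

lemma isCont_ramp_kernel: "0 < h \<Longrightarrow> isCont (ramp_kernel y h) x"
  unfolding ramp_kernel_def[abs_def] using bump_mass_pos
  by (intro continuous_intros isCont_o2[OF _ isCont_bump]) auto

lemma ramp_kernel_nonneg: "0 < h \<Longrightarrow> 0 \<le> ramp_kernel y h x"
  using bump_mass_pos by (simp add: ramp_kernel_def bump_eq)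

lemma ramp_kernel_eq_0: "0 < h \<Longrightarrow> x \<le> y \<or> y + h \<le> x \<Longrightarrow> ramp_kernel y h x = 0"
  by (auto simp: ramp_kernel_def bump_eq field_simps)

lemma set_integral_ramp_kernel:
  assumes "0 \<le> y" "0 < h" "y + h \<le> 1"
  shows "(LINT x:{0<..<1}|lborel. ramp_kernel y h x) = 1"
proof -
  have "(LINT x:{0..1}|lborel. ramp_kernel y h x) = ramp ((1 - y) / h) - ramp ((0 - y) / h)"
    unfolding set_lebesgue_integral_def
  proof (rule integral_FTC_atLeastAtMost)
    show "((\<lambda>x. ramp ((x - y) / h)) has_vector_derivative ramp_kernel y h x) (at x within {0..1})" for x
      using ramp_shift_has_derivative[OF assms(2)]
      by (simp add: has_real_derivative_iff_has_vector_derivative has_vector_derivative_at_within)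
    show "continuous_on {0..1} (ramp_kernel y h)"
      using isCont_ramp_kernel[OF assms(2)] continuous_at_imp_continuous_on by blast
  qed simp
  also have "\<dots> = 1"
    using assms by (simp add: ramp_eq_0 ramp_eq_1 field_simps)
  finally show ?thesis
    by (subst set_integral_discrete_difference[where X = "{0, 1}"]) auto
qed

lemma ramp_kernel_integral_approx:
  fixes f :: "real \<Rightarrow> real"
  assumes f: "continuous_on {0..1} f" and y: "0 \<le> y" "0 < h" "y + h \<le> 1"
    and close: "\<And>x. y \<le> x \<Longrightarrow> x \<le> y + h \<Longrightarrow> \<bar>f x - f y\<bar> \<le> c"
  shows "\<bar>(LINT x:{0<..<1}|lborel. f x * ramp_kernel y h x) - f y\<bar> \<le> c"
proof -
  have cont_K: "continuous_on {0..1} (ramp_kernel y h)"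
    using isCont_ramp_kernel[OF y(2)] continuous_at_imp_continuous_on by blast
  have int_K: "set_integrable lborel {0<..<1} (ramp_kernel y h)"
    by (rule set_integrable_Ioo_if_continuous_on_Icc[OF cont_K])
  have int_fK: "set_integrable lborel {0<..<1} (\<lambda>x. f x * ramp_kernel y h x)"
    by (intro set_integrable_Ioo_if_continuous_on_Icc continuous_on_mult f cont_K)
  have "(LINT x:{0<..<1}|lborel. f x * ramp_kernel y h x) - f y
      = (LINT x:{0<..<1}|lborel. (f x - f y) * ramp_kernel y h x)"
    using set_integral_ramp_kernel[OF y] int_K int_fK
    by (simp add: left_diff_distrib set_integral_diff)
  also have "\<bar>\<dots>\<bar> \<le> (LINT x:{0<..<1}|lborel. \<bar>(f x - f y) * ramp_kernel y h x\<bar>)"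
    using set_integral_norm_bound[of lborel "{0<..<1}" "\<lambda>x. (f x - f y) * ramp_kernel y h x"]
      int_K int_fK by (simp add: left_diff_distrib)
  also have "\<dots> \<le> (LINT x:{0<..<1}|lborel. c * ramp_kernel y h x)"
  proof (rule set_integral_mono)
    show "set_integrable lborel {0<..<1} (\<lambda>x. \<bar>(f x - f y) * ramp_kernel y h x\<bar>)"
      using int_K int_fK by (intro set_integrable_abs) (simp add: left_diff_distrib)
    show "set_integrable lborel {0<..<1} (\<lambda>x. c * ramp_kernel y h x)"
      using int_K by simp
    fix x
    show "\<bar>(f x - f y) * ramp_kernel y h x\<bar> \<le> c * ramp_kernel y h x"
    proof (cases "y \<le> x \<and> x \<le> y + h")
      case True
      then show ?thesis
        using close ramp_kernel_nonneg[OF y(2)] by (simp add: abs_mult mult_right_mono)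
    next
      case False
      then show ?thesis
        using ramp_kernel_eq_0[OF y(2)] by force
    qed
  qed
  also have "\<dots> = c"
    using set_integral_ramp_kernel[OF y] by simp
  finally show ?thesis .
qed

lemma ramp_kernel_integral_tendsto:
  fixes f :: "real \<Rightarrow> real"
  assumes f: "continuous_on {0..1} f" and y: "0 \<le> y" "y < 1"
  shows "((\<lambda>h. LINT x:{0<..<1}|lborel. f x * ramp_kernel y h x) \<longlongrightarrow> f y) (at_right 0)"
proof (rule tendstoI)
  fix e :: real assume "0 < e"
  then obtain d where d: "0 < d" "\<And>x. x \<in> {0..1} \<Longrightarrow> dist x y < d \<Longrightarrow> dist (f x) (f y) < e / 2"
    using f y unfolding continuous_on_iff by (metis atLeastAtMost_iff half_gt_zero less_eq_real_def)
  have "\<forall>\<^sub>F h in at_right 0. 0 < h \<and> h < min d (1 - y)"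
    using d(1) y eventually_at_right_real[of 0 "min d (1 - y)"] by simp
  then show "\<forall>\<^sub>F h in at_right 0. dist (LINT x:{0<..<1}|lborel. f x * ramp_kernel y h x) (f y) < e"
  proof (rule eventually_mono)
    fix h assume h: "0 < h \<and> h < min d (1 - y)"
    have "\<bar>(LINT x:{0<..<1}|lborel. f x * ramp_kernel y h x) - f y\<bar> \<le> e / 2"
    proof (rule ramp_kernel_integral_approx[OF f y(1)])
      fix x assume "y \<le> x" "x \<le> y + h"
      then show "\<bar>f x - f y\<bar> \<le> e / 2"
        using d(2)[of x] h y by (simp add: dist_real_def)
    qed (use h in auto)
    then show "dist (LINT x:{0<..<1}|lborel. f x * ramp_kernel y h x) (f y) < e"
      using \<open>0 < e\<close> by (simp add: dist_real_def)
  qed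
qed

definition smooth_indicator :: "real \<Rightarrow> real \<Rightarrow> real \<Rightarrow> real \<Rightarrow> real" where
  "smooth_indicator s t h x = ramp ((x - s) / h) - ramp ((x - t) / h)"

lemma smooth_indicator_has_derivative:
  "0 < h \<Longrightarrow> (smooth_indicator s t h has_real_derivative ramp_kernel s h x - ramp_kernel t h x) (at x)"
  unfolding smooth_indicator_def[abs_def] by (intro DERIV_diff ramp_shift_has_derivative)

lemma isCont_smooth_indicator: "isCont (smooth_indicator s t h) x"
proof -
  have "isCont (\<lambda>x. ramp ((x - c) / h)) x" for c
  proof (rule isCont_o2[where f = "\<lambda>x. (x - c) / h"])
    show "isCont (\<lambda>x. (x - c) / h) x"
      by (intro bounded_linear.isCont[OF bounded_linear_divide] continuous_intros)
    show "isCont ramp ((x - c) / h)"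
      using ramp_has_derivative DERIV_isCont by blast
  qed
  from this[of s] this[of t] show ?thesis
    unfolding smooth_indicator_def[abs_def] by (rule isCont_diff)
qed

lemma smooth_indicator_eq_indicator:
  assumes "0 < h" "s \<le> t" and x: "x \<le> s \<or> (s + h \<le> x \<and> x \<le> t) \<or> t + h \<le> x"
  shows "smooth_indicator s t h x = indicator {s<..t} x"
  using x
proof (elim disjE conjE)
  assume "x \<le> s"
  then have "(x - s) / h \<le> 0" "(x - t) / h \<le> 0"
    using assms(1,2) by (simp_all add: divide_le_0_iff)
  with \<open>x \<le> s\<close> show ?thesis
    by (simp add: smooth_indicator_def ramp_eq_0)
next
  assume "s + h \<le> x" "x \<le> t"
  then have "1 \<le> (x - s) / h" "(x - t) / h \<le> 0"
    using assms(1) by (simp_all add: divide_le_0_iff le_divide_eq)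
  with \<open>s + h \<le> x\<close> \<open>x \<le> t\<close> assms(1) show ?thesis
    by (simp add: smooth_indicator_def ramp_eq_0 ramp_eq_1)
next
  assume "t + h \<le> x"
  then have "1 \<le> (x - s) / h" "1 \<le> (x - t) / h"
    using assms(1,2) by (simp_all add: le_divide_eq)
  with \<open>t + h \<le> x\<close> assms(1) show ?thesis
    by (simp add: smooth_indicator_def ramp_eq_1)
qed

lemma abs_smooth_indicator_le_1: "\<bar>smooth_indicator s t h x\<bar> \<le> 1"
  using ramp_bounds[of "(x - s) / h"] ramp_bounds[of "(x - t) / h"]
  by (simp add: smooth_indicator_def)

lemma test_fun01_smooth_indicator:
  assumes "0 < s" "s \<le> t" "0 < h" "t + h < 1"
  shows "test_fun01 (smooth_indicator s t h)"
  unfolding test_fun01_def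
proof
  have "smooth (\<lambda>x. 1 * ramp ((1 / h) * x + (- s / h)) + (- 1) * ramp ((1 / h) * x + (- t / h)))"
    by (intro smooth_add smooth_affine smooth_ramp)
  then have "smooth (smooth_indicator s t h)"
    by (simp add: smooth_indicator_def[abs_def] diff_divide_distrib)
  then show "\<forall>k. (deriv ^^ k) (smooth_indicator s t h) differentiable_on UNIV"
    by (simp add: smooth_def)
  have "smooth_indicator s t h x = 0" if "x \<notin> {s..t + h}" for x
    using smooth_indicator_eq_indicator[OF assms(3,2), of x] that assms(3) by (auto simp: indicator_def)
  with assms show "\<exists>a b. 0 < a \<and> a \<le> b \<and> b < 1 \<and> (\<forall>x. x \<notin> {a..b} \<longrightarrow> smooth_indicator s t h x = 0)"
    by (intro exI[of _ s] exI[of _ "t + h"]) auto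
qed

lemma smooth_indicator_eventually_eq:
  assumes "s \<le> t"
  shows "\<forall>\<^sub>F h in at_right 0. smooth_indicator s t h x = indicator {s<..t} x"
proof -
  define d where "d = (if x \<le> s then 1 else if x \<le> t then x - s else x - t)"
  have "0 < d"
    using assms by (auto simp: d_def)
  then have "\<forall>\<^sub>F h in at_right 0. h \<in> {0<..<d}"
    by (intro eventually_at_right_real)
  then show ?thesis
  proof (rule eventually_mono)
    fix h assume "h \<in> {0<..<d}"
    then show "smooth_indicator s t h x = indicator {s<..t} x"
      by (intro smooth_indicator_eq_indicator[OF _ assms]) (auto simp: d_def split: if_splits)
  qed
qed

lemma smooth_indicator_integral_tendsto:
  fixes w :: "real \<Rightarrow> real"
  assumes w: "integrable lborel w" and "s \<le> t"
  shows "((\<lambda>h. \<integral>x. w x * smooth_indicator s t h x \<partial>lborel) \<longlongrightarrow> (LINT x:{s<..t}|lborel. w x))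
    (at_right 0)"
proof -
  have meas: "(\<lambda>x. w x * smooth_indicator s t (inverse u) x) \<in> borel_measurable lborel" for u
  proof -
    have "smooth_indicator s t (inverse u) \<in> borel_measurable lborel"
      by (simp add: borel_measurable_continuous_onI continuous_at_imp_continuous_on isCont_smooth_indicator)
    with borel_measurable_integrable[OF w] show ?thesis
      by (rule borel_measurable_times)
  qed
  have "((\<lambda>u. \<integral>x. w x * smooth_indicator s t (inverse u) x \<partial>lborel)
      \<longlongrightarrow> \<integral>x. w x * indicator {s<..t} x \<partial>lborel) at_top"
  proof (rule integral_dominated_convergence_at_top[OF _ meas w[THEN integrable_abs]])
    show "(\<lambda>x. w x * indicator {s<..t} x) \<in> borel_measurable lborel"
      using w by measurable
    show "\<forall>\<^sub>F u in at_top. AE x in lborel. norm (w x * smooth_indicator s t (inverse u) x) \<le> \<bar>w x\<bar>"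
      using abs_smooth_indicator_le_1
      by (intro always_eventually allI AE_I2) (simp add: abs_mult mult_left_le)
    show "AE x in lborel. ((\<lambda>u. w x * smooth_indicator s t (inverse u) x) \<longlongrightarrow> w x * indicator {s<..t} x) at_top"
    proof (rule AE_I2)
      fix x
      have "\<forall>\<^sub>F u in at_top. smooth_indicator s t (inverse u) x = indicator {s<..t} x"
        using smooth_indicator_eventually_eq[OF \<open>s \<le> t\<close>] filterlim_inverse_at_right_top
        by (rule eventually_compose_filterlim)
      then show "((\<lambda>u. w x * smooth_indicator s t (inverse u) x) \<longlongrightarrow> w x * indicator {s<..t} x) at_top"
        by (intro tendsto_eventually) (auto elim: eventually_mono)
    qed
  qed
  from filterlim_compose[OF this filterlim_inverse_at_top_right] show ?thesis
    by (simp add: set_lebesgue_integral_def mult.commute)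
qed

lemma weak_deriv01_smooth_indicator:
  fixes v w :: "real \<Rightarrow> real"
  assumes v: "continuous_on {0..1} v" and vw: "weak_deriv01 v w"
    and "0 < s" "s \<le> t" "0 < h" "t + h < 1"
  shows "(LINT x:{0<..<1}|lborel. v x * ramp_kernel s h x) - (LINT x:{0<..<1}|lborel. v x * ramp_kernel t h x)
    = - (LINT x:{0<..<1}|lborel. w x * smooth_indicator s t h x)"
proof -
  have "test_fun01 (smooth_indicator s t h)"
    using assms by (intro test_fun01_smooth_indicator)
  with vw have "(LINT x:{0<..<1}|lborel. v x * deriv (smooth_indicator s t h) x)
      = - (LINT x:{0<..<1}|lborel. w x * smooth_indicator s t h x)"
    unfolding weak_deriv01_def by blast
  moreover have "deriv (smooth_indicator s t h) = (\<lambda>x. ramp_kernel s h x - ramp_kernel t h x)"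
    using smooth_indicator_has_derivative \<open>0 < h\<close> DERIV_imp_deriv by fastforce
  moreover have "set_integrable lborel {0<..<1} (\<lambda>x. v x * ramp_kernel y h x)" for y
    using \<open>0 < h\<close> by (intro set_integrable_Ioo_if_continuous_on_Icc continuous_on_mult v
        continuous_at_imp_continuous_on ballI isCont_ramp_kernel)
  ultimately show ?thesis
    by (simp add: right_diff_distrib set_integral_diff)
qed

lemma weak_deriv01_fundamental_theorem:
  fixes v w :: "real \<Rightarrow> real"
  assumes v: "continuous_on {0..1} v" and vw: "weak_deriv01 v w"
    and st: "0 < s" "s < t" "t < 1"
  shows "v t - v s = (LINT x:{s<..t}|lborel. w x)"
proof -
  let ?K = "\<lambda>y h. LINT x:{0<..<1}|lborel. v x * ramp_kernel y h x"
  let ?C = "\<lambda>h. LINT x:{0<..<1}|lborel. w x * smooth_indicator s t h x"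
  have w: "set_integrable lborel {0<..<1} w"
    using vw by (simp add: weak_deriv01_def)
  have "((\<lambda>h. \<integral>x. (indicator {0<..<1} x * w x) * smooth_indicator s t h x \<partial>lborel)
      \<longlongrightarrow> (LINT x:{s<..t}|lborel. indicator {0<..<1} x * w x)) (at_right 0)"
    using w st by (intro smooth_indicator_integral_tendsto) (auto simp: set_integrable_def)
  moreover have "(LINT x:{s<..t}|lborel. indicator {0<..<1} x * w x) = (LINT x:{s<..t}|lborel. w x)"
    using st by (intro set_lebesgue_integral_cong) (auto simp: indicator_def)
  ultimately have lim_C: "(?C \<longlongrightarrow> (LINT x:{s<..t}|lborel. w x)) (at_right 0)"
    by (simp add: set_lebesgue_integral_def mult.assoc)
  have "((\<lambda>h. ?K s h - ?K t h) \<longlongrightarrow> v s - v t) (at_right 0)"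
    using st by (intro tendsto_diff ramp_kernel_integral_tendsto v) auto
  moreover have "\<forall>\<^sub>F h in at_right 0. h \<in> {0<..<1 - t}"
    using st(3) by (intro eventually_at_right_real) simp
  then have "\<forall>\<^sub>F h in at_right 0. ?K s h - ?K t h = - ?C h"
    by (rule eventually_mono) (use st in \<open>auto intro: weak_deriv01_smooth_indicator[OF v vw]\<close>)
  ultimately have "((\<lambda>h. - ?C h) \<longlongrightarrow> v s - v t) (at_right 0)"
    by (rule Lim_transform_eventually)
  from tendsto_unique[OF trivial_limit_at_right_real this tendsto_minus[OF lim_C]]
  show ?thesis
    by simp
qed

section \<open>A chain rule estimate\<close>

lemma abs_powr_plus_one_diff_le:
  fixes a b p :: real
  assumes "0 \<le> p"
  shows "\<bar>b\<bar> powr (p + 1) - \<bar>a\<bar> powr (p + 1) \<le> (p + 1) * max (\<bar>a\<bar> powr p) (\<bar>b\<bar> powr p) * \<bar>b - a\<bar>"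
proof (cases "\<bar>a\<bar> < \<bar>b\<bar>")
  case True
  have "\<bar>b\<bar> powr (p + 1) - \<bar>a\<bar> powr (p + 1) \<le> (p + 1) * \<bar>b\<bar> powr p * (\<bar>b\<bar> - \<bar>a\<bar>)"
  proof (cases "a = 0")
    case True
    then show ?thesis
      using assms mult_right_mono[of 1 "p + 1" "\<bar>b\<bar> powr p * \<bar>b\<bar>"] by (simp add: powr_add mult_ac)
  next
    case False
    have "\<exists>z. \<bar>a\<bar> < z \<and> z < \<bar>b\<bar> \<and>
        \<bar>b\<bar> powr (p + 1) - \<bar>a\<bar> powr (p + 1) = (\<bar>b\<bar> - \<bar>a\<bar>) * ((p + 1) * z powr (p + 1 - 1))"
    proof (rule MVT2[OF True])
      fix x assume "\<bar>a\<bar> \<le> x" "x \<le> \<bar>b\<bar>"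
      with False have "0 < x"
        by simp
      then show "((\<lambda>s. s powr (p + 1)) has_real_derivative (p + 1) * x powr (p + 1 - 1)) (at x)"
        by (rule has_real_derivative_powr)
    qed
    then obtain z where z: "\<bar>a\<bar> < z" "z < \<bar>b\<bar>"
      and mvt: "\<bar>b\<bar> powr (p + 1) - \<bar>a\<bar> powr (p + 1) = (\<bar>b\<bar> - \<bar>a\<bar>) * ((p + 1) * z powr (p + 1 - 1))"
      by blast
    have "z powr p \<le> \<bar>b\<bar> powr p"
      using z assms by (intro powr_mono2) auto
    then show ?thesis
      using mvt True assms by (simp add: mult_left_mono mult_ac)
  qed
  also have "\<dots> \<le> (p + 1) * max (\<bar>a\<bar> powr p) (\<bar>b\<bar> powr p) * \<bar>b - a\<bar>"
    using True assms by (intro mult_mono) (auto simp: le_max_iff_disj intro!: mult_nonneg_nonneg)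
  finally show ?thesis .
next
  case False
  then have "\<bar>b\<bar> powr (p + 1) \<le> \<bar>a\<bar> powr (p + 1)"
    using assms by (intro powr_mono2) auto
  moreover have "0 \<le> (p + 1) * max (\<bar>a\<bar> powr p) (\<bar>b\<bar> powr p) * \<bar>b - a\<bar>"
    using assms by (intro mult_nonneg_nonneg) (auto simp: le_max_iff_disj)
  ultimately show ?thesis
    by linarith
qed

lemma nondecreasing_by_small_steps:
  fixes f :: "real \<Rightarrow> real"
  assumes "a \<le> b" "0 < \<delta>"
    and step: "\<And>s t. a \<le> s \<Longrightarrow> s < t \<Longrightarrow> t \<le> b \<Longrightarrow> t - s < \<delta> \<Longrightarrow> f s \<le> f t"
  shows "f a \<le> f b"
proof -
  obtain n :: nat where n: "(b - a) / \<delta> < real n"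
    using reals_Archimedean2 by blast
  then have "0 < n"
    using assms(1,2) by (cases n) (auto simp: divide_less_0_iff)
  define T where "T i = a + (b - a) * real i / real n" for i
  have T_step: "T (Suc i) - T i = (b - a) / real n" for i
    using \<open>0 < n\<close> by (simp add: T_def field_simps)
  have "(b - a) / real n < \<delta>"
    using n \<open>0 < n\<close> assms(2) by (simp add: field_simps)
  have "f a \<le> f (T i)" if "i \<le> n" for i
    using that
  proof (induction i)
    case 0
    then show ?case
      by (simp add: T_def)
  next
    case (Suc i)
    have "a \<le> T i"
      using assms(1) by (simp add: T_def)
    have "(b - a) * real (Suc i) \<le> (b - a) * real n"
      using Suc.prems assms(1) by (intro mult_left_mono) auto
    then have "T (Suc i) \<le> b"
      using \<open>0 < n\<close> by (simp add: T_def field_simps)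
    then have "f (T i) \<le> f (T (Suc i))"
    proof (cases "a = b")
      case False
      then have "0 < (b - a) / real n"
        using assms(1) \<open>0 < n\<close> by simp
      then show ?thesis
        using \<open>a \<le> T i\<close> \<open>T (Suc i) \<le> b\<close> T_step[of i] \<open>(b - a) / real n < \<delta>\<close> \<open>0 < n\<close> assms(1)
        by (intro step) auto
    qed (simp add: T_def)
    with Suc show ?case
      by simp
  qed
  from this[of n] \<open>0 < n\<close> show ?thesis
    by (simp add: T_def)
qed

lemma abs_powr_plus_one_increment_le:
  fixes v w :: "real \<Rightarrow> real"
  assumes ftc: "v t - v s = (LINT x:{s<..t}|lborel. w x)"
    and w: "set_integrable lborel {s<..t} w"
    and int: "set_integrable lborel {s<..t} (\<lambda>\<xi>. (\<bar>v \<xi>\<bar> powr p + \<omega>) * \<bar>w \<xi>\<bar>)"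
    and p: "0 \<le> p"
    and close: "\<And>\<xi>. s < \<xi> \<Longrightarrow> \<xi> \<le> t \<Longrightarrow> max (\<bar>v s\<bar> powr p) (\<bar>v t\<bar> powr p) \<le> \<bar>v \<xi>\<bar> powr p + \<omega>"
  shows "\<bar>v t\<bar> powr (p + 1) - \<bar>v s\<bar> powr (p + 1)
    \<le> (p + 1) * (LINT \<xi>:{s<..t}|lborel. (\<bar>v \<xi>\<bar> powr p + \<omega>) * \<bar>w \<xi>\<bar>)"
proof -
  let ?m = "max (\<bar>v s\<bar> powr p) (\<bar>v t\<bar> powr p)"
  have m: "0 \<le> ?m"
    by (simp add: le_max_iff_disj)
  have "\<bar>v t\<bar> powr (p + 1) - \<bar>v s\<bar> powr (p + 1) \<le> (p + 1) * ?m * \<bar>v t - v s\<bar>"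
    by (rule abs_powr_plus_one_diff_le[OF p])
  also have "\<dots> \<le> (p + 1) * ?m * (LINT \<xi>:{s<..t}|lborel. \<bar>w \<xi>\<bar>)"
    using set_integral_norm_bound[OF w] ftc m p by (intro mult_left_mono) auto
  also have "\<dots> = (p + 1) * (LINT \<xi>:{s<..t}|lborel. ?m * \<bar>w \<xi>\<bar>)"
    by simp
  also have "\<dots> \<le> (p + 1) * (LINT \<xi>:{s<..t}|lborel. (\<bar>v \<xi>\<bar> powr p + \<omega>) * \<bar>w \<xi>\<bar>)"
    using p close int set_integrable_abs[OF w]
    by (intro mult_left_mono set_integral_mono) (auto intro: mult_right_mono)
  finally show ?thesis .
qed

lemma abs_powr_plus_one_le_integral_slack:
  fixes v w :: "real \<Rightarrow> real"
  assumes v: "continuous_on {0..1} v" and w: "set_integrable lborel {0<..<1} w"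
    and ftc: "\<And>s t. 0 < s \<Longrightarrow> s < t \<Longrightarrow> t < 1 \<Longrightarrow> v t - v s = (LINT x:{s<..t}|lborel. w x)"
    and p: "0 < p" and \<omega>: "0 < \<omega>" and x: "0 < x\<^sub>0" "x\<^sub>0 \<le> x" "x < 1"
  shows "\<bar>v x\<bar> powr (p + 1)
    \<le> \<bar>v x\<^sub>0\<bar> powr (p + 1) + (p + 1) * (LINT \<xi>:{x\<^sub>0<..x}|lborel. (\<bar>v \<xi>\<bar> powr p + \<omega>) * \<bar>w \<xi>\<bar>)"
proof -
  define u where "u \<xi> = \<bar>v \<xi>\<bar> powr p" for \<xi>
  have u: "continuous_on {0..1} u"
    unfolding u_def using continuous_on_abs_powr[OF v p] .
  have int: "set_integrable lborel {a<..b} (\<lambda>\<xi>. (u \<xi> + \<omega>) * \<bar>w \<xi>\<bar>)" if "0 \<le> a" "b < 1" for a b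
    using that
    by (intro set_integrable_continuous_on_Icc_mult[OF continuous_on_add[OF u continuous_on_const]]
        set_integrable_subset[OF set_integrable_abs[OF w]]) auto
  obtain \<delta> where \<delta>: "0 < \<delta>" "\<And>a b. a \<in> {0..1} \<Longrightarrow> b \<in> {0..1} \<Longrightarrow> dist b a < \<delta> \<Longrightarrow> dist (u b) (u a) < \<omega>"
    using compact_uniformly_continuous[OF u compact_Icc] \<omega> unfolding uniformly_continuous_on_def by metis
  define \<Psi> where "\<Psi> t = (p + 1) * (LINT \<xi>:{x\<^sub>0<..t}|lborel. (u \<xi> + \<omega>) * \<bar>w \<xi>\<bar>) - \<bar>v t\<bar> powr (p + 1)"
    for t
  have "\<Psi> x\<^sub>0 \<le> \<Psi> x"
  proof (rule nondecreasing_by_small_steps[OF x(2) \<delta>(1)])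
    fix s t assume st: "x\<^sub>0 \<le> s" "s < t" "t \<le> x" "t - s < \<delta>"
    have "max (u s) (u t) \<le> u \<xi> + \<omega>" if "s < \<xi>" "\<xi> \<le> t" for \<xi>
      using \<delta>(2)[of \<xi> s] \<delta>(2)[of \<xi> t] st that x by (auto simp: dist_real_def)
    then have "\<bar>v t\<bar> powr (p + 1) - \<bar>v s\<bar> powr (p + 1)
        \<le> (p + 1) * (LINT \<xi>:{s<..t}|lborel. (u \<xi> + \<omega>) * \<bar>w \<xi>\<bar>)"
      unfolding u_def using st x p
      by (intro abs_powr_plus_one_increment_le ftc int[unfolded u_def] set_integrable_subset[OF w]) auto
    moreover have "(LINT \<xi>:{x\<^sub>0<..t}|lborel. (u \<xi> + \<omega>) * \<bar>w \<xi>\<bar>)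
        = (LINT \<xi>:{x\<^sub>0<..s}|lborel. (u \<xi> + \<omega>) * \<bar>w \<xi>\<bar>) + (LINT \<xi>:{s<..t}|lborel. (u \<xi> + \<omega>) * \<bar>w \<xi>\<bar>)"
    proof -
      have "{x\<^sub>0<..t} = {x\<^sub>0<..s} \<union> {s<..t}"
        using st by auto
      then show ?thesis
        using st x by (simp add: set_integral_Un int)
    qed
    ultimately show "\<Psi> s \<le> \<Psi> t"
      by (simp add: \<Psi>_def algebra_simps)
  qed
  moreover have "(LINT \<xi>:{}|lborel. (u \<xi> + \<omega>) * \<bar>w \<xi>\<bar>) = 0"
    by (simp add: set_lebesgue_integral_def)
  ultimately show ?thesis
    by (simp add: \<Psi>_def u_def)
qed

lemma set_integral_abs_powr_plus_mult_le:
  fixes v w :: "real \<Rightarrow> real"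
  assumes v: "continuous_on {0..1} v" and w: "set_integrable lborel {0<..<1} w"
    and p: "0 < p" and "0 \<le> \<omega>" "0 < x\<^sub>0" "x\<^sub>0 \<le> x" "x < 1"
  shows "(LINT \<xi>:{x\<^sub>0<..x}|lborel. (\<bar>v \<xi>\<bar> powr p + \<omega>) * \<bar>w \<xi>\<bar>)
    \<le> (LINT \<xi>:{0<..<1}|lborel. \<bar>v \<xi>\<bar> powr p * \<bar>w \<xi>\<bar>) + \<omega> * (LINT \<xi>:{0<..<1}|lborel. \<bar>w \<xi>\<bar>)"
proof -
  have int: "set_integrable lborel A (\<lambda>\<xi>. \<bar>v \<xi>\<bar> powr p * \<bar>w \<xi>\<bar>)"
    if "A \<subseteq> {0<..<1}" "A \<in> sets borel" for A
    using that
    by (intro set_integrable_continuous_on_Icc_mult[OF continuous_on_abs_powr[OF v p]]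
        set_integrable_subset[OF set_integrable_abs[OF w]]) auto
  have sub: "{x\<^sub>0<..x} \<subseteq> {0<..<1}"
    using assms by auto
  have int_w: "set_integrable lborel {x\<^sub>0<..x} (\<lambda>\<xi>. \<bar>w \<xi>\<bar>)"
    using sub by (intro set_integrable_subset[OF set_integrable_abs[OF w]]) auto
  have "(LINT \<xi>:{x\<^sub>0<..x}|lborel. (\<bar>v \<xi>\<bar> powr p + \<omega>) * \<bar>w \<xi>\<bar>)
      = (LINT \<xi>:{x\<^sub>0<..x}|lborel. \<bar>v \<xi>\<bar> powr p * \<bar>w \<xi>\<bar>) + \<omega> * (LINT \<xi>:{x\<^sub>0<..x}|lborel. \<bar>w \<xi>\<bar>)"
    using int[OF sub] set_integrable_mult_right[OF int_w, of \<omega>] by (simp add: distrib_right)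
  also have "\<dots> \<le> (LINT \<xi>:{0<..<1}|lborel. \<bar>v \<xi>\<bar> powr p * \<bar>w \<xi>\<bar>) + \<omega> * (LINT \<xi>:{0<..<1}|lborel. \<bar>w \<xi>\<bar>)"
    using assms sub int[of "{0<..<1}"] set_integrable_abs[OF w]
    by (intro add_mono mult_left_mono set_integral_mono_set_nonneg) auto
  finally show ?thesis .
qed

lemma abs_powr_plus_one_le_integral:
  fixes v w :: "real \<Rightarrow> real"
  assumes v: "continuous_on {0..1} v" "v 0 = 0" and w: "set_integrable lborel {0<..<1} w"
    and ftc: "\<And>s t. 0 < s \<Longrightarrow> s < t \<Longrightarrow> t < 1 \<Longrightarrow> v t - v s = (LINT x:{s<..t}|lborel. w x)"
    and p: "0 < p" and x: "0 < x" "x < 1"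
  shows "\<bar>v x\<bar> powr (p + 1) \<le> (p + 1) * (LINT \<xi>:{0<..<1}|lborel. \<bar>v \<xi>\<bar> powr p * \<bar>w \<xi>\<bar>)"
proof -
  let ?I = "LINT \<xi>:{0<..<1}|lborel. \<bar>v \<xi>\<bar> powr p * \<bar>w \<xi>\<bar>"
  let ?W = "LINT \<xi>:{0<..<1}|lborel. \<bar>w \<xi>\<bar>"
  have slack: "\<bar>v x\<bar> powr (p + 1) \<le> \<bar>v x\<^sub>0\<bar> powr (p + 1) + (p + 1) * (?I + \<omega> * ?W)"
    if "0 < \<omega>" "0 < x\<^sub>0" "x\<^sub>0 \<le> x" for \<omega> x\<^sub>0
    using abs_powr_plus_one_le_integral_slack[OF v(1) w ftc p that x(2)]
      set_integral_abs_powr_plus_mult_le[OF v(1) w p less_imp_le[OF that(1)] that(2,3) x(2)] p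
    by (smt (verit) mult_left_mono)
  have no_slack: "\<bar>v x\<bar> powr (p + 1) \<le> \<bar>v x\<^sub>0\<bar> powr (p + 1) + (p + 1) * ?I"
    if "0 < x\<^sub>0" "x\<^sub>0 \<le> x" for x\<^sub>0
  proof (rule tendsto_le[OF trivial_limit_at_right_real _ tendsto_const])
    show "((\<lambda>\<omega>. \<bar>v x\<^sub>0\<bar> powr (p + 1) + (p + 1) * (?I + \<omega> * ?W))
        \<longlongrightarrow> \<bar>v x\<^sub>0\<bar> powr (p + 1) + (p + 1) * ?I) (at_right 0)"
      by (auto intro!: tendsto_eq_intros)
    show "\<forall>\<^sub>F \<omega> in at_right 0. \<bar>v x\<bar> powr (p + 1) \<le> \<bar>v x\<^sub>0\<bar> powr (p + 1) + (p + 1) * (?I + \<omega> * ?W)"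
      using eventually_at_right_less[of "0::real"] by (rule eventually_mono) (intro slack that)
  qed
  show ?thesis
  proof (rule tendsto_le[OF trivial_limit_at_right_real _ tendsto_const])
    have "((\<lambda>x\<^sub>0. \<bar>v x\<^sub>0\<bar>) \<longlongrightarrow> 0) (at_right 0)"
      using continuous_on_Icc_at_rightD[OF v(1)] v(2) tendsto_rabs by fastforce
    then have "((\<lambda>x\<^sub>0. \<bar>v x\<^sub>0\<bar> powr (p + 1) + (p + 1) * ?I) \<longlongrightarrow> 0 + (p + 1) * ?I) (at_right 0)"
      using p by (intro tendsto_add tendsto_zero_powrI[where b = "p + 1"] tendsto_const) auto
    then show "((\<lambda>x\<^sub>0. \<bar>v x\<^sub>0\<bar> powr (p + 1) + (p + 1) * ?I) \<longlongrightarrow> (p + 1) * ?I) (at_right 0)"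
      by simp
    have "\<forall>\<^sub>F x\<^sub>0 in at_right 0. x\<^sub>0 \<in> {0<..<x}"
      using x by (intro eventually_at_right_real)
    then show "\<forall>\<^sub>F x\<^sub>0 in at_right 0. \<bar>v x\<bar> powr (p + 1) \<le> \<bar>v x\<^sub>0\<bar> powr (p + 1) + (p + 1) * ?I"
      by (rule eventually_mono) (auto intro: no_slack)
  qed
qed

lemma W12_0_abs_powr_plus_one_le_integral:
  assumes "W12_0 v w" "0 < p" "0 < x" "x < 1"
  shows "\<bar>v x\<bar> powr (p + 1) \<le> (p + 1) * (LINT \<xi>:{0<..<1}|lborel. \<bar>v \<xi>\<bar> powr p * \<bar>w \<xi>\<bar>)"
  using assms weak_deriv01_fundamental_theorem[of v w]
  by (intro abs_powr_plus_one_le_integral) (auto simp: W12_0_def weak_deriv01_def)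

section \<open>The interpolation inequality\<close>

lemma L2norm01_square: "(L2norm01 f)\<^sup>2 = (LINT x:{0<..<1}|lborel. (f x)\<^sup>2)"
proof -
  have "0 \<le> (LINT x:{0<..<1}|lborel. (f x)\<^sup>2)"
    by (simp add: set_lebesgue_integral_def)
  then show ?thesis
    by (simp add: L2norm01_def)
qed

lemma Lpnorm01_powr: "0 < p \<Longrightarrow> Lpnorm01 p f powr p = (LINT x:{0<..<1}|lborel. \<bar>f x\<bar> powr p)"
  by (simp add: Lpnorm01_def powr_powr set_lebesgue_integral_def)

lemma L2norm01_powr_le:
  fixes v :: "real \<Rightarrow> real"
  assumes v: "L2_01 v" and q: "0 < q"
    and bound: "\<And>x. 0 < x \<Longrightarrow> x < 1 \<Longrightarrow> \<bar>v x\<bar> powr q \<le> R"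
  shows "L2norm01 v powr q \<le> R"
proof -
  have "0 \<le> R"
    using bound[of "1 / 2"] powr_ge_zero[of "\<bar>v (1 / 2)\<bar>" q] by linarith
  define S where "S = (LINT x:{0<..<1}|lborel. (v x)\<^sup>2)"
  have "0 \<le> S"
    by (simp add: S_def set_lebesgue_integral_def)
  have "S \<le> (LINT x:{0<..<1::real}|lborel. R powr (2 / q))"
    unfolding S_def
  proof (rule set_integral_mono)
    show "set_integrable lborel {0<..<1} (\<lambda>x. (v x)\<^sup>2)"
      using v by (simp add: L2_01_def)
    show "set_integrable lborel {0<..<1::real} (\<lambda>x. R powr (2 / q))"
      by (simp add: set_integrable_def)
    fix x :: real assume "x \<in> {0<..<1}"
    then have "0 < x" "x < 1"
      by auto
    have "(v x)\<^sup>2 = (\<bar>v x\<bar> powr q) powr (2 / q)"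
      using q by (simp add: powr_powr)
    also have "\<dots> \<le> R powr (2 / q)"
      using bound[OF \<open>0 < x\<close> \<open>x < 1\<close>] q by (intro powr_mono2) auto
    finally show "(v x)\<^sup>2 \<le> R powr (2 / q)" .
  qed
  also have "\<dots> = R powr (2 / q)"
    by (simp add: set_integral_const)
  finally have "S \<le> R powr (2 / q)" .
  have "L2norm01 v powr q = S powr (q / 2)"
    using \<open>0 \<le> S\<close> by (simp add: L2norm01_def S_def powr_half_sqrt[symmetric] powr_powr)
  also have "\<dots> \<le> (R powr (2 / q)) powr (q / 2)"
    using \<open>0 \<le> S\<close> \<open>S \<le> R powr (2 / q)\<close> q by (intro powr_mono2) auto
  also have "\<dots> = R"
    using \<open>0 \<le> R\<close> q by (simp add: powr_powr)
  finally show ?thesis .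
qed

lemma integral_abs_powr_mult_le_norms:
  fixes v w :: "real \<Rightarrow> real"
  assumes v: "continuous_on {0..1} v" and w: "L2_01 w" and r: "0 < r" and "0 < \<epsilon>"
  shows "(LINT x:{0<..<1}|lborel. \<bar>v x\<bar> powr ((1 + r) / 2) * \<bar>w x\<bar>)
    \<le> \<epsilon> * (L2norm01 w)\<^sup>2 + (Lpnorm01 (1 + r) v) powr (1 + r) / (4 * \<epsilon>)"
proof -
  have square: "(\<bar>a\<bar> powr ((1 + r) / 2))\<^sup>2 = \<bar>a\<bar> powr (1 + r)" for a :: real
    by (simp add: power2_eq_square powr_add[symmetric])
  have "(LINT x:{0<..<1}|lborel. \<bar>v x\<bar> powr ((1 + r) / 2) * \<bar>w x\<bar>)
      \<le> \<epsilon> * (LINT x:{0<..<1}|lborel. \<bar>w x\<bar>\<^sup>2)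
        + (LINT x:{0<..<1}|lborel. (\<bar>v x\<bar> powr ((1 + r) / 2))\<^sup>2) / (4 * \<epsilon>)"
  proof (rule set_integral_mult_le_eps_square_add[OF _ _ _ \<open>0 < \<epsilon>\<close>])
    show "set_integrable lborel {0<..<1} (\<lambda>x. \<bar>v x\<bar> powr ((1 + r) / 2) * \<bar>w x\<bar>)"
      using w r
      by (intro set_integrable_continuous_on_Icc_mult[OF continuous_on_abs_powr[OF v]]
          set_integrable_abs) (auto simp: L2_01_def)
    show "set_integrable lborel {0<..<1} (\<lambda>x. (\<bar>v x\<bar> powr ((1 + r) / 2))\<^sup>2)"
      unfolding square using r
      by (intro set_integrable_Ioo_if_continuous_on_Icc continuous_on_abs_powr[OF v]) simp
    show "set_integrable lborel {0<..<1} (\<lambda>x. \<bar>w x\<bar>\<^sup>2)"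
      using w by (simp add: L2_01_def)
  qed
  also have "\<dots> = \<epsilon> * (L2norm01 w)\<^sup>2 + (Lpnorm01 (1 + r) v) powr (1 + r) / (4 * \<epsilon>)"
    using r by (simp add: square L2norm01_square Lpnorm01_powr)
  finally show ?thesis .
qed

theorem corollary1:
  fixes r \<epsilon> :: real and v v_y :: "real \<Rightarrow> real"
  assumes "0 < r" and "r < 1"
    and "W12_0 v v_y"
    and "0 < \<epsilon>"
  shows "L2norm01 v powr ((3 + r) / 2)
           \<le> (3 + r) * \<epsilon> / 2 * (L2norm01 v_y)\<^sup>2
              + (3 + r) / (8 * \<epsilon>) * (Lpnorm01 (1 + r) v) powr (1 + r)"
proof -
  define p where "p = (1 + r) / 2"
  have "0 < p" "(3 + r) / 2 = p + 1"
    using assms(1) by (auto simp: p_def)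
  let ?I = "LINT x:{0<..<1}|lborel. \<bar>v x\<bar> powr p * \<bar>v_y x\<bar>"
  have "L2norm01 v powr (p + 1) \<le> (p + 1) * ?I"
    using assms(3) \<open>0 < p\<close>
    by (intro L2norm01_powr_le W12_0_abs_powr_plus_one_le_integral) (auto simp: W12_0_def)
  also have "\<dots> \<le> (p + 1) * (\<epsilon> * (L2norm01 v_y)\<^sup>2 + (Lpnorm01 (1 + r) v) powr (1 + r) / (4 * \<epsilon>))"
    using assms \<open>0 < p\<close> unfolding p_def
    by (intro mult_left_mono integral_abs_powr_mult_le_norms) (auto simp: W12_0_def)
  also have "\<dots> = (3 + r) * \<epsilon> / 2 * (L2norm01 v_y)\<^sup>2 + (3 + r) / (8 * \<epsilon>) * (Lpnorm01 (1 + r) v) powr (1 + r)"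
    using assms(4) by (simp add: p_def field_simps)
  finally show ?thesis
    unfolding \<open>(3 + r) / 2 = p + 1\<close> .
qed

end
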